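(* Let $m\ge2$, let $C=\mathrm{diag}(c_1,\dots,c_m)$ be a real diagonal matrix, and let $L(\rho)=-2\,\mathrm{tr}(C\rho)$ on $\dot P_m$, whose gradient system with respect to the quantum SLD Fisher metric is $\frac{d\rho}{dt}=(\rho C+C\rho)-2\,\mathrm{tr}(\rho C)\rho$. Let $\Lambda(w)=-\frac12w^TCw$ on $\mathcal S_m$, with gradient $\mathrm{grad}\,\Lambda(w)=-Cw+(w^TCw)w$ (so that $\frac{dw}{dt}=-\mathrm{grad}\,\Lambda(w)=Cw-(w^TCw)w$ is the averaged learning equation of Hebb type), and let $\mu_\ast\mathrm{grad}\,\Lambda$ be the vector field on $\mathcal D_m$ defined by $\mu_\ast\mathrm{grad}\,\Lambda(\mu(w))=\mu_{\ast,w}(\mathrm{grad}\,\Lambda(w))$ for $w\in\mathcal S_m$. Then for every $\Theta\in\mathcal D_m$, $$\mathrm{grad}\,L(\Theta)=\mu_\ast\mathrm{grad}\,\Lambda(\Theta).$$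
   Context: $\mathcal S_m=\{w\in\mathbf R^m:\|w\|=1,\ w_k\ne0\ \forall k\}$ with $T_w\mathcal S_m=\{u:w^Tu=0\}$ and metric $u^Tu'$; $\mathcal D_m=\{\mathrm{diag}(\theta_1,\dots,\theta_m):\sum\theta_k=1,\theta_k>0\}\subset\dot P_m$; $\mu:\mathcal S_m\to\mathcal D_m$, $\mu(w)=\mathrm{diag}(w_1^2,\dots,w_m^2)$, with differential $\mu_{\ast,w}(u)=2\,\mathrm{diag}(w_1u_1,\dots,w_mu_m)$. (The vector field $\mu_\ast\mathrm{grad}\,\Lambda$ is well defined since $\mu(w)=\mu(w')$ iff $w'$ is obtained from $w$ by coordinate sign changes, under which $\mathrm{grad}\,\Lambda$ is equivariant.) $\dot P_m$ is the set of $m\times m$ complex Hermitian positive definite trace-one matrices, $T_\rho\dot P_m$ the Hermitian traceless matrices. The SLD $\mathcal L_\rho(\Xi)$ is the Hermitian solution of $\frac12(\rho\mathcal L_\rho(\Xi)+\mathcal L_\rho(\Xi)\rho)=\Xi$; the quantum SLD Fisher metric is $\langle\Xi,\Xi'\rangle_\rho=\frac12\mathrm{tr}[\rho(\mathcal L_\rho(\Xi)\mathcal L_\rho(\Xi')+\mathcal L_\rho(\Xi')\mathcal L_\rho(\Xi))]$. The gradient $\mathrm{grad}\,L(\rho)\in T_\rho\dot P_m$ is defined by $\langle\mathrm{grad}\,L(\rho),\Xi\rangle_\rho=\frac{d}{d\tau}\big|_{\tau=0}L(r(\tau))$ for every smooth curve $r$ in $\dot P_m$ with $r(0)=\rho$,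 $r'(0)=\Xi$. *)

theory Defs
  imports "HOL-Analysis.Analysis"
begin

text \<open>Complex m x m matrices are modelled as complex^'n^'n with a finite index type 'n
  (m = CARD('n)); real vectors in R^m as real^'n.\<close>

definition mtr :: "complex^'n^'n \<Rightarrow> complex" where
  "mtr A = (\<Sum>i\<in>UNIV. A$i$i)"

definition ctrans :: "complex^'n^'n \<Rightarrow> complex^'n^'n" where
  "ctrans A = (\<chi> i j. cnj (A$j$i))"

definition hermitian :: "complex^'n^'n \<Rightarrow> bool" where
  "hermitian A \<longleftrightarrow> ctrans A = A"

definition pos_def :: "complex^'n^'n \<Rightarrow> bool" where
  "pos_def A \<longleftrightarrow> hermitian A \<and>
     (\<forall>x::complex^'n. x \<noteq> 0 \<longrightarrow> Re (\<Sum>i\<in>UNIV. cnj (x$i) * (A *v x)$i) > 0)"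

definition Pdot :: "(complex^'n^'n) set" where
  "Pdot = {\<rho>. pos_def \<rho> \<and> mtr \<rho> = 1}"

definition tangent :: "(complex^'n^'n) set" where
  "tangent = {X. hermitian X \<and> mtr X = 0}"

definition SLD :: "complex^'n^'n \<Rightarrow> complex^'n^'n \<Rightarrow> complex^'n^'n" where
  "SLD \<rho> \<Xi> = (THE X. hermitian X \<and> (1/2) *\<^sub>R (\<rho> ** X + X ** \<rho>) = \<Xi>)"

definition qfisher :: "complex^'n^'n \<Rightarrow> complex^'n^'n \<Rightarrow> complex^'n^'n \<Rightarrow> real" where
  "qfisher \<rho> \<Xi> \<Xi>' = Re ((1/2) * mtr (\<rho> ** (SLD \<rho> \<Xi> ** SLD \<rho> \<Xi>' + SLD \<rho> \<Xi>' ** SLD \<rho> \<Xi>)))"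

definition smooth_on :: "real set \<Rightarrow> (real \<Rightarrow> 'a::real_normed_vector) \<Rightarrow> bool" where
  "smooth_on S r \<longleftrightarrow> (\<exists>D :: nat \<Rightarrow> real \<Rightarrow> 'a. (\<forall>t\<in>S. D 0 t = r t) \<and>
      (\<forall>k. \<forall>t\<in>S. (D k has_vector_derivative D (Suc k) t) (at t)))"

definition curve_through :: "(real \<Rightarrow> complex^'n^'n) \<Rightarrow> complex^'n^'n \<Rightarrow> complex^'n^'n \<Rightarrow> bool" where
  "curve_through r \<rho> \<Xi> \<longleftrightarrow> (\<exists>\<epsilon>>0. smooth_on {-\<epsilon><..<\<epsilon>} r \<and> (\<forall>\<tau>\<in>{-\<epsilon><..<\<epsilon>}. r \<tau> \<in> Pdot))
      \<and> r 0 = \<rho> \<and> (r has_vector_derivative \<Xi>) (at 0)"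

definition qgrad :: "(complex^'n^'n \<Rightarrow> real) \<Rightarrow> complex^'n^'n \<Rightarrow> complex^'n^'n" where
  "qgrad L \<rho> = (THE G. G \<in> tangent \<and>
     (\<forall>r \<Xi>. curve_through r \<rho> \<Xi> \<longrightarrow>
        ((\<lambda>\<tau>. L (r \<tau>)) has_real_derivative qfisher \<rho> G \<Xi>) (at 0)))"

definition cdiag :: "real^'n \<Rightarrow> complex^'n^'n" where
  "cdiag c = (\<chi> i j. if i = j then complex_of_real (c$i) else 0)"

definition Lcost :: "real^'n \<Rightarrow> complex^'n^'n \<Rightarrow> real" where
  "Lcost c \<rho> = -2 * Re (mtr (cdiag c ** \<rho>))"

definition Sm :: "(real^'n) set" where
  "Sm = {w. norm w = 1 \<and> (\<forall>k. w$k \<noteq> 0)}"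

definition Dm :: "(complex^'n^'n) set" where
  "Dm = {cdiag \<theta> | \<theta>. (\<forall>k. \<theta>$k > 0) \<and> (\<Sum>k\<in>UNIV. \<theta>$k) = 1}"

definition mu :: "real^'n \<Rightarrow> complex^'n^'n" where
  "mu w = cdiag (\<chi> k. (w$k)^2)"

definition mu_diff :: "real^'n \<Rightarrow> real^'n \<Rightarrow> complex^'n^'n" where
  "mu_diff w u = cdiag (\<chi> k. 2 * (w$k * u$k))"

definition gradLambda :: "real^'n \<Rightarrow> real^'n \<Rightarrow> real^'n" where
  "gradLambda c w = (let Cw = (\<chi> k. c$k * w$k) in - Cw + (w \<bullet> Cw) *\<^sub>R w)"

definition mu_push_gradLambda :: "real^'n \<Rightarrow> complex^'n^'n \<Rightarrow> complex^'n^'n" where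
  "mu_push_gradLambda c \<Theta> =
     (let w = (SOME w. w \<in> Sm \<and> mu w = \<Theta>) in mu_diff w (gradLambda c w))"

end

theory Submission
  imports Defs
begin

text \<open>Every \<open>\<Theta> \<in> D\<^sub>m\<close> is a diagonal state \<open>diag(t)\<close>, and there the SLD equation decouples
  entrywise: the SLD of \<open>\<Xi>\<close> has entries \<open>2 \<Xi>\<^sub>i\<^sub>j / (t\<^sub>i + t\<^sub>j)\<close>, so the Fisher metric is
  \<open>\<langle>A, B\<rangle> = Re \<Sum>\<^sub>i\<^sub>j 2 A\<^sub>i\<^sub>j B\<^sub>j\<^sub>i / (t\<^sub>i + t\<^sub>j)\<close>, positive definite on Hermitian matrices.
  Since the cost is linear, its derivative along a curve with velocity \<open>\<Xi>\<close> is \<open>-2 \<Sum>\<^sub>i c\<^sub>i \<Xi>\<^sub>i\<^sub>i\<close>,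
  and on traceless \<open>\<Xi>\<close> this is represented by \<open>G = diag(2 t\<^sub>k (\<Sum>\<^sub>j c\<^sub>j t\<^sub>j - c\<^sub>k))\<close>. Any other
  representative differs from \<open>G\<close> by some \<open>D\<close> with \<open>\<langle>D, D\<rangle> = 0\<close>, tested along the line \<open>\<Theta> + \<tau> D\<close>,
  which stays in \<open>\<dot>P\<^sub>m\<close> for small \<open>\<tau>\<close>. On the other side, for \<open>w\<^sub>k\<^sup>2 = t\<^sub>k\<close> the push-forward
  \<open>2 w\<^sub>k (grad \<Lambda>(w))\<^sub>k = 2 w\<^sub>k\<^sup>2 (w\<^sup>T C w - c\<^sub>k)\<close> is the same matrix \<open>G\<close>.\<close>

lemma cdiag_mult_left: "(cdiag t ** X) $ i $ j = complex_of_real (t$i) * X$i$j"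
  by (simp add: matrix_matrix_mult_def cdiag_def if_distrib[where f="\<lambda>x. x * _"] cong: if_cong)

lemma cdiag_mult_right: "(X ** cdiag t) $ i $ j = X$i$j * complex_of_real (t$j)"
  by (simp add: matrix_matrix_mult_def cdiag_def if_distrib cong: if_cong)

lemma cdiag_inject: "cdiag a = cdiag b \<longleftrightarrow> a = b"
  by (auto simp: cdiag_def vec_eq_iff dest: spec2)

lemma hermitian_iff_entries: "hermitian A \<longleftrightarrow> (\<forall>i j. cnj (A$j$i) = A$i$j)"
  by (simp add: hermitian_def ctrans_def vec_eq_iff)

lemma hermitian_cdiag: "hermitian (cdiag t)"
  by (simp add: hermitian_iff_entries cdiag_def)

lemma linear_ctrans: "linear ctrans"
  by (rule linearI) (simp_all add: ctrans_def vec_eq_iff)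

lemma linear_mtr: "linear mtr"
  by (rule linearI) (simp_all add: mtr_def sum.distrib scaleR_sum_right)

lemma hermitian_add_scaleR:
  "hermitian A \<Longrightarrow> hermitian B \<Longrightarrow> hermitian (A + a *\<^sub>R B)"
  by (simp add: hermitian_iff_entries)

lemma hermitian_diff: "hermitian A \<Longrightarrow> hermitian B \<Longrightarrow> hermitian (A - B)"
  using hermitian_add_scaleR[of A B "-1"] by simp

lemma mtr_cdiag: "mtr (cdiag t) = complex_of_real (\<Sum>i\<in>UNIV. t$i)"
  by (simp add: mtr_def cdiag_def)

lemma mtr_cdiag_mult: "mtr (cdiag t ** M) = (\<Sum>i\<in>UNIV. complex_of_real (t$i) * M$i$i)"
  by (simp add: mtr_def cdiag_mult_left)

lemma Lcost_eq: "Lcost c X = -2 * (\<Sum>i\<in>UNIV. c$i * Re (X$i$i))"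
  by (simp add: Lcost_def mtr_cdiag_mult Re_sum)

lemma linear_Lcost: "linear (Lcost c)"
  by (rule linearI) (simp_all add: Lcost_eq sum.distrib algebra_simps sum_distrib_left)

subsection \<open>The SLD Fisher metric at a diagonal state\<close>

lemma SLD_cdiag:
  assumes pos: "\<forall>k. t$k > 0" and "hermitian A"
  shows "SLD (cdiag t) A = (\<chi> i j. 2 * A$i$j / complex_of_real (t$i + t$j))"
proof -
  have ne: "complex_of_real (t$i + t$j) \<noteq> 0" for i j
    using pos by (metis add_pos_pos of_real_eq_0_iff order_less_irrefl)
  have sym: "((1/2) *\<^sub>R (cdiag t ** X + X ** cdiag t)) $ i $ j
      = complex_of_real (t$i + t$j) * X$i$j / 2" for X i j
    by (simp add: cdiag_mult_left cdiag_mult_right) (simp add: scaleR_conv_of_real algebra_simps)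
  define Y where "Y = (\<chi> i j. 2 * A$i$j / complex_of_real (t$i + t$j))"
  show ?thesis
    unfolding SLD_def Y_def[symmetric]
  proof (rule the_equality)
    have "hermitian Y"
      using assms(2) by (simp add: Y_def hermitian_iff_entries add.commute)
    moreover have "(1/2) *\<^sub>R (cdiag t ** Y + Y ** cdiag t) = A"
      unfolding vec_eq_iff sym using ne by (simp add: Y_def)
    ultimately show "hermitian Y \<and> (1/2) *\<^sub>R (cdiag t ** Y + Y ** cdiag t) = A" ..
  next
    fix X assume "hermitian X \<and> (1/2) *\<^sub>R (cdiag t ** X + X ** cdiag t) = A"
    then have "A$i$j = complex_of_real (t$i + t$j) * X$i$j / 2" for i j
      using sym by auto
    then show "X = Y"
      using ne by (simp add: Y_def vec_eq_iff field_simps)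
  qed
qed

lemma qfisher_cdiag:
  assumes pos: "\<forall>k. t$k > 0" and hA: "hermitian A" and hB: "hermitian B"
  shows "qfisher (cdiag t) A B =
    Re (\<Sum>i\<in>UNIV. \<Sum>j\<in>UNIV. 2 * A$i$j * B$j$i / complex_of_real (t$i + t$j))"
proof -
  define Y where "Y = SLD (cdiag t) A"
  define Z where "Z = SLD (cdiag t) B"
  have ne: "complex_of_real (t$i + t$j) \<noteq> 0" for i j
    using pos by (metis add_pos_pos of_real_eq_0_iff order_less_irrefl)
  have "mtr (cdiag t ** (Y ** Z + Z ** Y))
      = (\<Sum>i\<in>UNIV. \<Sum>k\<in>UNIV. complex_of_real (t$i) * (Y$i$k * Z$k$i))
      + (\<Sum>i\<in>UNIV. \<Sum>k\<in>UNIV. complex_of_real (t$i) * (Z$i$k * Y$k$i))"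
  proof -
    have "(Y ** Z + Z ** Y)$i$i = (\<Sum>k\<in>UNIV. Y$i$k * Z$k$i) + (\<Sum>k\<in>UNIV. Z$i$k * Y$k$i)" for i
      by (simp add: matrix_matrix_mult_def)
    then show ?thesis
      by (simp only: mtr_cdiag_mult distrib_left sum.distrib sum_distrib_left)
  qed
  also have "(\<Sum>i\<in>UNIV. \<Sum>k\<in>UNIV. complex_of_real (t$i) * (Z$i$k * Y$k$i))
      = (\<Sum>i\<in>UNIV. \<Sum>k\<in>UNIV. complex_of_real (t$k) * (Y$i$k * Z$k$i))"
    by (subst sum.swap) (simp add: mult.commute)
  also have "(\<Sum>i\<in>UNIV. \<Sum>k\<in>UNIV. complex_of_real (t$i) * (Y$i$k * Z$k$i))
      + (\<Sum>i\<in>UNIV. \<Sum>k\<in>UNIV. complex_of_real (t$k) * (Y$i$k * Z$k$i))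
      = (\<Sum>i\<in>UNIV. \<Sum>k\<in>UNIV. 4 * A$i$k * B$k$i / complex_of_real (t$i + t$k))"
    unfolding sum.distrib[symmetric]
  proof (intro sum.cong refl)
    fix i k
    have "complex_of_real (t$i) * (Y$i$k * Z$k$i) + complex_of_real (t$k) * (Y$i$k * Z$k$i)
        = complex_of_real (t$i + t$k) * (Y$i$k * Z$k$i)"
      by (simp add: algebra_simps)
    also have "\<dots> = 4 * A$i$k * B$k$i / complex_of_real (t$i + t$k)"
    proof -
      define S where "S = complex_of_real (t$i + t$k)"
      have entries: "Y$i$k = 2 * A$i$k / S" "Z$k$i = 2 * B$k$i / S"
        by (simp_all add: Y_def Z_def S_def SLD_cdiag[OF pos hA] SLD_cdiag[OF pos hB] add.commute)
      show ?thesis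
        using ne[of i k] unfolding S_def[symmetric] entries by (simp add: field_simps)
    qed
    finally show "complex_of_real (t$i) * (Y$i$k * Z$k$i) + complex_of_real (t$k) * (Y$i$k * Z$k$i)
        = 4 * A$i$k * B$k$i / complex_of_real (t$i + t$k)" .
  qed
  finally show ?thesis
    by (simp add: qfisher_def Y_def[symmetric] Z_def[symmetric] sum_distrib_left mult.assoc)
qed

lemma qfisher_cdiag_diff_left:
  assumes "\<forall>k. t$k > 0" and "hermitian G" "hermitian H" "hermitian X"
  shows "qfisher (cdiag t) (G - H) X = qfisher (cdiag t) G X - qfisher (cdiag t) H X"
  using assms hermitian_diff[of G H]
  by (simp add: qfisher_cdiag sum_subtractf[symmetric] diff_divide_distrib[symmetric] algebra_simps)

lemma qfisher_cdiag_self: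
  assumes "\<forall>k. t$k > 0" and "hermitian D"
  shows "qfisher (cdiag t) D D = (\<Sum>i\<in>UNIV. \<Sum>j\<in>UNIV. 2 * (cmod (D$i$j))\<^sup>2 / (t$i + t$j))"
proof -
  have entry: "2 * D$i$j * D$j$i / complex_of_real (t$i + t$j)
      = complex_of_real (2 * (cmod (D$i$j))\<^sup>2 / (t$i + t$j))" for i j
  proof -
    have "D$j$i = cnj (D$i$j)"
      using assms(2) unfolding hermitian_iff_entries by metis
    then show ?thesis
      by (simp add: complex_norm_square[symmetric] mult.assoc)
  qed
  show ?thesis
    unfolding qfisher_cdiag[OF assms(1,2,2)] entry by (simp add: Re_sum)
qed

lemma qfisher_cdiag_self_eq_0:
  assumes pos: "\<forall>k. t$k > 0" and "hermitian D" and "qfisher (cdiag t) D D = 0"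
  shows "D = 0"
proof -
  have nonneg: "0 \<le> 2 * (cmod (D$i$j))\<^sup>2 / (t$i + t$j)" for i j
    using pos by (simp add: add_nonneg_nonneg less_imp_le)
  have "(\<Sum>i\<in>UNIV. \<Sum>j\<in>UNIV. 2 * (cmod (D$i$j))\<^sup>2 / (t$i + t$j)) = 0"
    using assms(3) qfisher_cdiag_self[OF pos assms(2)] by simp
  then have "\<forall>i\<in>UNIV. (\<Sum>j\<in>UNIV. 2 * (cmod (D$i$j))\<^sup>2 / (t$i + t$j)) = 0"
    by (subst (asm) sum_nonneg_eq_0_iff) (auto intro: sum_nonneg nonneg)
  then have "2 * (cmod (D$i$j))\<^sup>2 / (t$i + t$j) = 0" for i j
    using nonneg by (simp add: sum_nonneg_eq_0_iff)
  moreover have "t$i + t$j \<noteq> 0" for i j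
    using pos by (metis add_pos_pos less_irrefl)
  ultimately show "D = 0"
    by (simp add: vec_eq_iff)
qed

lemma qfisher_cdiag_cdiag_left:
  assumes pos: "\<forall>k. t$k > 0" and "hermitian X"
  shows "qfisher (cdiag t) (cdiag g) X = (\<Sum>i\<in>UNIV. g$i / t$i * Re (X$i$i))"
proof -
  have "(\<Sum>j\<in>UNIV. 2 * cdiag g $ i $ j * X$j$i / complex_of_real (t$i + t$j))
      = complex_of_real (g$i / t$i) * X$i$i" for i
  proof -
    have "(\<Sum>j\<in>UNIV. 2 * cdiag g $ i $ j * X$j$i / complex_of_real (t$i + t$j))
        = (\<Sum>j\<in>UNIV. if i = j then 2 * complex_of_real (g$i) * X$i$i / complex_of_real (t$i + t$i) else 0)"
      by (rule sum.cong) (auto simp: cdiag_def)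
    also have "\<dots> = complex_of_real (g$i / t$i) * X$i$i"
      using pos[rule_format, of i] by (simp add: field_simps)
    finally show ?thesis .
  qed
  then show ?thesis
    using assms by (simp add: qfisher_cdiag hermitian_cdiag Re_sum)
qed

subsection \<open>Straight lines through a diagonal state\<close>

lemma cmod_quadratic_form_le:
  fixes x :: "complex^'n" and D :: "complex^'n^'n"
  shows "cmod (\<Sum>i\<in>UNIV. \<Sum>j\<in>UNIV. cnj (x$i) * D$i$j * x$j)
     \<le> (\<Sum>i\<in>UNIV. \<Sum>j\<in>UNIV. cmod (D$i$j)) * (\<Sum>k\<in>UNIV. (cmod (x$k))\<^sup>2)"
proof -
  define N where "N = (\<Sum>k\<in>UNIV. (cmod (x$k))\<^sup>2)"
  have sq_le: "(cmod (x$i))\<^sup>2 \<le> N" for i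
    unfolding N_def by (rule member_le_sum) auto
  have prod_le: "cmod (x$i) * cmod (x$j) \<le> N" for i j
  proof -
    have "cmod (x$i) * cmod (x$j) \<le> ((cmod (x$i))\<^sup>2 + (cmod (x$j))\<^sup>2) / 2"
      using sum_squares_bound[of "cmod (x$i)" "cmod (x$j)"] by (simp add: power2_eq_square field_simps)
    also have "\<dots> \<le> (N + N) / 2"
      by (intro divide_right_mono add_mono sq_le) simp
    finally show ?thesis by simp
  qed
  have "cmod (\<Sum>i\<in>UNIV. \<Sum>j\<in>UNIV. cnj (x$i) * D$i$j * x$j)
      \<le> (\<Sum>i\<in>UNIV. \<Sum>j\<in>UNIV. cmod (D$i$j) * (cmod (x$i) * cmod (x$j)))"
    by (rule order_trans[OF norm_sum sum_mono], rule order_trans[OF norm_sum])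
       (simp add: norm_mult mult_ac)
  also have "\<dots> \<le> (\<Sum>i\<in>UNIV. \<Sum>j\<in>UNIV. cmod (D$i$j) * N)"
    by (intro sum_mono mult_left_mono prod_le) simp
  finally show ?thesis
    by (simp add: N_def sum_distrib_right)
qed

lemma quadratic_form_cdiag_add:
  fixes x :: "complex^'n" and D :: "complex^'n^'n"
  shows "(\<Sum>i\<in>UNIV. cnj (x$i) * ((cdiag t + \<tau> *\<^sub>R D) *v x)$i)
    = complex_of_real (\<Sum>i\<in>UNIV. t$i * (cmod (x$i))\<^sup>2)
      + complex_of_real \<tau> * (\<Sum>i\<in>UNIV. \<Sum>j\<in>UNIV. cnj (x$i) * D$i$j * x$j)"
proof -
  have mv: "((cdiag t + \<tau> *\<^sub>R D) *v x)$i
      = complex_of_real (t$i) * x$i + complex_of_real \<tau> * (\<Sum>j\<in>UNIV. D$i$j * x$j)" for i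
  proof -
    have "(\<Sum>j\<in>UNIV. cdiag t $ i $ j * x$j) = (\<Sum>j\<in>UNIV. if i = j then complex_of_real (t$i) * x$j else 0)"
      by (rule sum.cong) (auto simp: cdiag_def)
    moreover have "((cdiag t + \<tau> *\<^sub>R D) *v x)$i
        = (\<Sum>j\<in>UNIV. cdiag t $ i $ j * x$j) + (\<Sum>j\<in>UNIV. (\<tau> *\<^sub>R D$i$j) * x$j)"
      by (simp add: matrix_vector_mult_def distrib_right sum.distrib)
    ultimately show ?thesis
      by (simp add: scaleR_conv_of_real sum_distrib_left mult.assoc)
  qed
  have diag_term: "cnj (x$i) * (complex_of_real (t$i) * x$i) = complex_of_real (t$i * (cmod (x$i))\<^sup>2)" for i
  proof -
    have "x$i * cnj (x$i) = complex_of_real ((cmod (x$i))\<^sup>2)"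
      by (rule complex_norm_square[symmetric])
    then show ?thesis by (simp add: mult_ac)
  qed
  have off_term: "cnj (x$i) * (complex_of_real \<tau> * (\<Sum>j\<in>UNIV. D$i$j * x$j))
      = complex_of_real \<tau> * (\<Sum>j\<in>UNIV. cnj (x$i) * D$i$j * x$j)" for i
    by (simp add: sum_distrib_left mult_ac)
  show ?thesis
    by (simp only: mv distrib_left diag_term off_term sum.distrib of_real_sum sum_distrib_left[symmetric])
qed

lemma cdiag_add_scaleR_pos_def:
  fixes D :: "complex^'n^'n"
  assumes pos: "\<forall>k. t$k > 0" and "hermitian D"
  obtains \<epsilon> where "\<epsilon> > 0" and "\<And>\<tau>. \<bar>\<tau>\<bar> < \<epsilon> \<Longrightarrow> pos_def (cdiag t + \<tau> *\<^sub>R D)"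
proof
  define m where "m = Min (range (\<lambda>k. t$k))"
  have "m \<in> range (\<lambda>k. t$k)" unfolding m_def by (rule Min_in) auto
  then have m_pos: "m > 0" using pos by auto
  have m_le: "m \<le> t$k" for k unfolding m_def by (rule Min_le) auto
  define M where "M = (\<Sum>i\<in>UNIV. \<Sum>j\<in>UNIV. cmod (D$i$j))"
  have M_nonneg: "M \<ge> 0" unfolding M_def by (intro sum_nonneg) auto
  show "m / (M + 1) > 0" using m_pos M_nonneg by simp
  fix \<tau> :: real assume "\<bar>\<tau>\<bar> < m / (M + 1)"
  then have "\<bar>\<tau>\<bar> * (M + 1) < m" using M_nonneg by (simp add: pos_less_divide_eq)
  then have \<tau>M: "\<bar>\<tau>\<bar> * M < m" by (simp add: distrib_left)
  have "Re (\<Sum>i\<in>UNIV. cnj (x$i) * ((cdiag t + \<tau> *\<^sub>R D) *v x)$i) > 0" if "x \<noteq> 0" for x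
  proof -
    define N where "N = (\<Sum>k\<in>UNIV. (cmod (x$k))\<^sup>2)"
    define Q where "Q = (\<Sum>i\<in>UNIV. \<Sum>j\<in>UNIV. cnj (x$i) * D$i$j * x$j)"
    obtain k where "x$k \<noteq> 0" using \<open>x \<noteq> 0\<close> by (auto simp: vec_eq_iff)
    then have N_pos: "N > 0"
      unfolding N_def by (intro sum_pos2[of _ k]) auto
    have "\<bar>\<tau> * Re Q\<bar> \<le> \<bar>\<tau>\<bar> * (M * N)"
      unfolding abs_mult M_def N_def Q_def
      by (intro mult_left_mono order_trans[OF abs_Re_le_cmod cmod_quadratic_form_le]) auto
    also have "\<dots> < m * N" using \<tau>M N_pos by (simp add: mult.assoc[symmetric])
    also have "m * N \<le> (\<Sum>i\<in>UNIV. t$i * (cmod (x$i))\<^sup>2)"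
      unfolding N_def sum_distrib_left by (intro sum_mono mult_right_mono m_le) auto
    finally show ?thesis
      by (simp add: quadratic_form_cdiag_add Q_def[symmetric])
  qed
  then show "pos_def (cdiag t + \<tau> *\<^sub>R D)"
    using \<open>hermitian D\<close> by (simp add: pos_def_def hermitian_add_scaleR hermitian_cdiag)
qed

lemma curve_through_line:
  fixes D :: "complex^'n^'n"
  assumes pos: "\<forall>k. t$k > 0" and sum1: "(\<Sum>k\<in>UNIV. t$k) = 1" and "D \<in> tangent"
  shows "curve_through (\<lambda>\<tau>. cdiag t + \<tau> *\<^sub>R D) (cdiag t) D"
proof -
  obtain \<epsilon> where "\<epsilon> > 0" and pd: "\<And>\<tau>. \<bar>\<tau>\<bar> < \<epsilon> \<Longrightarrow> pos_def (cdiag t + \<tau> *\<^sub>R D)"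
    using cdiag_add_scaleR_pos_def[OF pos] \<open>D \<in> tangent\<close> unfolding tangent_def by blast
  have "mtr (cdiag t + \<tau> *\<^sub>R D) = 1" for \<tau>
    using \<open>D \<in> tangent\<close>
    by (simp add: tangent_def linear_add[OF linear_mtr] linear_scale[OF linear_mtr] mtr_cdiag sum1)
  with pd have in_Pdot: "\<forall>\<tau>\<in>{-\<epsilon><..<\<epsilon>}. cdiag t + \<tau> *\<^sub>R D \<in> Pdot"
    by (auto simp: Pdot_def)
  have deriv: "((\<lambda>\<tau>. cdiag t + \<tau> *\<^sub>R D) has_vector_derivative D) (at s)" for s
    unfolding has_vector_derivative_def by (auto intro!: derivative_eq_intros)
  define Dk :: "nat \<Rightarrow> real \<Rightarrow> complex^'n^'n" where
    "Dk k = (case k of 0 \<Rightarrow> (\<lambda>\<tau>. cdiag t + \<tau> *\<^sub>R D) | Suc 0 \<Rightarrow> (\<lambda>_. D) | _ \<Rightarrow> (\<lambda>_. 0))" for k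
  have "(Dk k has_vector_derivative Dk (Suc k) s) (at s)" for k s
    using deriv[of s] by (auto simp: Dk_def split: nat.split)
  then have "smooth_on {-\<epsilon><..<\<epsilon>} (\<lambda>\<tau>. cdiag t + \<tau> *\<^sub>R D)"
    unfolding smooth_on_def by (intro exI[of _ Dk]) (auto simp: Dk_def)
  with \<open>\<epsilon> > 0\<close> in_Pdot deriv[of 0] show ?thesis
    by (auto simp: curve_through_def)
qed

subsection \<open>The gradient at a diagonal state\<close>

lemma has_vector_derivative_linear_const:
  fixes f :: "'a::euclidean_space \<Rightarrow> 'b::real_normed_vector"
  assumes "linear f" and "(r has_vector_derivative X) (at 0)"
    and "\<epsilon> > 0" and "\<forall>\<tau>\<in>{-\<epsilon><..<\<epsilon>}. f (r \<tau>) = k"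
  shows "f X = 0"
proof -
  have "((\<lambda>\<tau>. f (r \<tau>)) has_vector_derivative f X) (at 0)"
    using assms(1,2) by (simp add: bounded_linear.has_vector_derivative linear_conv_bounded_linear)
  then have "((\<lambda>\<tau>. k) has_vector_derivative f X) (at 0)"
    by (rule has_vector_derivative_transform_within_open[of _ _ _ "{-\<epsilon><..<\<epsilon>}"]) (use assms(3,4) in auto)
  then show ?thesis
    using has_vector_derivative_const vector_derivative_unique_at by blast
qed

lemma curve_through_tangent:
  assumes "curve_through r \<rho> \<Xi>"
  shows "\<Xi> \<in> tangent"
proof -
  obtain \<epsilon> where "\<epsilon> > 0" and in_Pdot: "\<forall>\<tau>\<in>{-\<epsilon><..<\<epsilon>}. r \<tau> \<in> Pdot"
    and deriv: "(r has_vector_derivative \<Xi>) (at 0)"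
    using assms unfolding curve_through_def by blast
  have "linear (\<lambda>A. ctrans A - A)"
    using linear_ctrans by (intro linear_compose_sub linear_ident)
  then have "ctrans \<Xi> - \<Xi> = 0"
    by (rule has_vector_derivative_linear_const[OF _ deriv \<open>\<epsilon> > 0\<close>])
       (use in_Pdot in \<open>auto simp: Pdot_def pos_def_def hermitian_def\<close>)
  moreover have "mtr \<Xi> = 0"
    by (rule has_vector_derivative_linear_const[OF linear_mtr deriv \<open>\<epsilon> > 0\<close>])
       (use in_Pdot in \<open>auto simp: Pdot_def\<close>)
  ultimately show ?thesis
    by (simp add: tangent_def hermitian_def)
qed

lemma curve_through_linear_deriv:
  assumes "linear f" and "curve_through r \<rho> \<Xi>"
  shows "((\<lambda>\<tau>. f (r \<tau>)) has_real_derivative f \<Xi>) (at 0)"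
  using assms bounded_linear.has_vector_derivative[of f r \<Xi>]
  by (simp add: curve_through_def has_real_derivative_iff_has_vector_derivative
      linear_conv_bounded_linear)

lemma qgrad_cdiag_eqI:
  assumes pos: "\<forall>k. t$k > 0" and sum1: "(\<Sum>k\<in>UNIV. t$k) = 1" and "G \<in> tangent"
    and deriv: "\<And>r \<Xi>. curve_through r (cdiag t) \<Xi> \<Longrightarrow>
      ((\<lambda>\<tau>. L (r \<tau>)) has_real_derivative qfisher (cdiag t) G \<Xi>) (at 0)"
  shows "qgrad L (cdiag t) = G"
  unfolding qgrad_def
proof (rule the_equality)
  show "G \<in> tangent \<and> (\<forall>r \<Xi>. curve_through r (cdiag t) \<Xi> \<longrightarrow>
      ((\<lambda>\<tau>. L (r \<tau>)) has_real_derivative qfisher (cdiag t) G \<Xi>) (at 0))"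
    using \<open>G \<in> tangent\<close> deriv by blast
next
  fix G' assume G': "G' \<in> tangent \<and> (\<forall>r \<Xi>. curve_through r (cdiag t) \<Xi> \<longrightarrow>
      ((\<lambda>\<tau>. L (r \<tau>)) has_real_derivative qfisher (cdiag t) G' \<Xi>) (at 0))"
  define D where "D = G' - G"
  have herm: "hermitian G" "hermitian G'" "hermitian D"
    using G' \<open>G \<in> tangent\<close> hermitian_diff by (auto simp: tangent_def D_def)
  have "D \<in> tangent"
    using G' \<open>G \<in> tangent\<close> herm by (simp add: tangent_def D_def linear_diff[OF linear_mtr])
  then have line: "curve_through (\<lambda>\<tau>. cdiag t + \<tau> *\<^sub>R D) (cdiag t) D"
    by (rule curve_through_line[OF pos sum1])
  have "qfisher (cdiag t) G' D = qfisher (cdiag t) G D"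
    using DERIV_unique G' deriv[OF line] line by blast
  then have "qfisher (cdiag t) D D = 0"
    using qfisher_cdiag_diff_left[OF pos herm(2,1,3)] by (simp add: D_def)
  then have "D = 0"
    by (rule qfisher_cdiag_self_eq_0[OF pos herm(3)])
  then show "G' = G" by (simp add: D_def)
qed

lemma qfisher_cdiag_represents_Lcost:
  assumes pos: "\<forall>k. t$k > 0" and "\<Xi> \<in> tangent"
  shows "qfisher (cdiag t) (cdiag (\<chi> k. 2 * t$k * ((\<Sum>j\<in>UNIV. c$j * t$j) - c$k))) \<Xi> = Lcost c \<Xi>"
proof -
  define s where "s = (\<Sum>j\<in>UNIV. c$j * t$j)"
  have "(\<Sum>i\<in>UNIV. Re (\<Xi>$i$i)) = 0"
    using \<open>\<Xi> \<in> tangent\<close> by (simp add: tangent_def mtr_def flip: Re_sum)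
  have "qfisher (cdiag t) (cdiag (\<chi> k. 2 * t$k * ((\<Sum>j\<in>UNIV. c$j * t$j) - c$k))) \<Xi>
      = (\<Sum>i\<in>UNIV. 2 * t$i * (s - c$i) / t$i * Re (\<Xi>$i$i))"
    using assms by (simp add: qfisher_cdiag_cdiag_left tangent_def s_def)
  also have "\<dots> = (\<Sum>i\<in>UNIV. (2 * s - 2 * c$i) * Re (\<Xi>$i$i))"
    using pos by (intro sum.cong refl) (simp add: less_imp_neq[symmetric] field_simps)
  also have "\<dots> = 2 * s * (\<Sum>i\<in>UNIV. Re (\<Xi>$i$i)) - 2 * (\<Sum>i\<in>UNIV. c$i * Re (\<Xi>$i$i))"
    by (simp add: algebra_simps sum_subtractf sum_distrib_left)
  finally show ?thesis
    using \<open>(\<Sum>i\<in>UNIV. Re (\<Xi>$i$i)) = 0\<close> by (simp add: Lcost_eq)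
qed

subsection \<open>The push-forward of the Hebbian gradient field\<close>

lemma mu_diff_gradLambda:
  "mu_diff w (gradLambda c w) =
     cdiag (\<chi> k. 2 * (w$k)\<^sup>2 * ((\<Sum>j\<in>UNIV. c$j * (w$j)\<^sup>2) - c$k))"
proof -
  have "w \<bullet> (\<chi> k. c$k * w$k) = (\<Sum>j\<in>UNIV. c$j * (w$j)\<^sup>2)"
    by (simp add: inner_vec_def power2_eq_square mult_ac)
  then show ?thesis
    by (simp add: mu_diff_def gradLambda_def power2_eq_square algebra_simps)
qed

lemma mu_push_gradLambda_cdiag:
  fixes t c :: "real^'n"
  assumes pos: "\<forall>k. t$k > 0" and sum1: "(\<Sum>k\<in>UNIV. t$k) = 1"
  shows "mu_push_gradLambda c (cdiag t) = cdiag (\<chi> k. 2 * t$k * ((\<Sum>j\<in>UNIV. c$j * t$j) - c$k))"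
proof -
  have mu_eq: "mu w = cdiag t \<longleftrightarrow> (\<forall>k. (w$k)\<^sup>2 = t$k)" for w
    unfolding mu_def cdiag_inject by (simp add: vec_eq_iff)
  define w0 :: "real^'n" where "w0 = (\<chi> k. sqrt (t$k))"
  have w0_sq: "(w0$k)\<^sup>2 = t$k" for k
    using pos by (simp add: w0_def less_imp_le)
  then have "w0 \<bullet> w0 = 1"
    using sum1 by (simp add: inner_vec_def power2_eq_square)
  then have "w0 \<in> Sm \<and> mu w0 = cdiag t"
    using pos w0_sq by (simp add: Sm_def norm_eq_1 mu_eq w0_def) (metis less_irrefl)
  then have "\<exists>w. w \<in> Sm \<and> mu w = cdiag t" ..
  from someI_ex[OF this] have "\<forall>k. ((SOME w. w \<in> Sm \<and> mu w = cdiag t)$k)\<^sup>2 = t$k"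
    by (simp add: mu_eq)
  then show ?thesis
    by (simp add: mu_push_gradLambda_def mu_diff_gradLambda)
qed

theorem theorem1:
  fixes c :: "real^'n" and \<Theta> :: "complex^'n^'n"
  assumes "CARD('n) \<ge> 2"
    and "\<Theta> \<in> Dm"
  shows "qgrad (Lcost c) \<Theta> = mu_push_gradLambda c \<Theta>"
proof -
  obtain t where pos: "\<forall>k. t$k > 0" and sum1: "(\<Sum>k\<in>UNIV. t$k) = 1" and \<Theta>: "\<Theta> = cdiag t"
    using assms(2) unfolding Dm_def by blast
  define s where "s = (\<Sum>j\<in>UNIV. c$j * t$j)"
  define G where "G = cdiag (\<chi> k. 2 * t$k * (s - c$k))"
  have "(\<Sum>k\<in>UNIV. 2 * t$k * (s - c$k)) = 2 * s * (\<Sum>k\<in>UNIV. t$k) - 2 * (\<Sum>k\<in>UNIV. c$k * t$k)"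
    by (simp add: algebra_simps sum_subtractf sum_distrib_left)
  then have "G \<in> tangent"
    using sum1 by (simp add: tangent_def G_def hermitian_cdiag mtr_cdiag s_def)
  moreover have "qfisher (cdiag t) G \<Xi> = Lcost c \<Xi>" if "\<Xi> \<in> tangent" for \<Xi>
    using qfisher_cdiag_represents_Lcost[OF pos that] by (simp add: G_def s_def)
  ultimately have "qgrad (Lcost c) (cdiag t) = G"
    by (intro qgrad_cdiag_eqI[OF pos sum1])
       (simp_all add: curve_through_tangent curve_through_linear_deriv[OF linear_Lcost])
  then show ?thesis
    using mu_push_gradLambda_cdiag[OF pos sum1] by (simp add: \<Theta> G_def s_def)
qed

end
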